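(* Let $M$ be a finite monoid. Every filtered left $M$-set is isomorphic to $Me$ for some idempotent $e\in M$. Moreover, $e\mapsto Me$ yields an equivalence of categories $\mathfrak I(M)^{op}\simeq \mathbf{Pts}(M)$, where $\mathbf{Pts}(M)$ is identified (via Diaconescu's theorem) with the category of filtered left $M$-sets and $M$-equivariant maps.
   Context: A left $M$-set $A$ is filtered if the functor $(-)\otimes_M A$ from right $M$-sets to sets preserves finite limits; equivalently (F1) $A\neq\emptyset$; (F2) if $m_1a=m_2a$ ($m_i\in M,a\in A$) then there are $m\in M,\tilde a\in A$ with $m\tilde a=a$, $m_1m=m_2m$; (F3) for $a_1,a_2\in A$ there are $m_1,m_2\in M$, $a\in A$ with $m_ia=a_i$. $\mathbf{Pts}(M)$ is the category of points of the topos of right $M$-sets. The category $\mathfrak I(M)$ has as objects the idempotents of $M$, with $\mathrm{Hom}_{\mathfrak I(M)}(e,f)=fMe=\{fme\mid m\in M\}$, composition given by multiplication in $M$ (the composite of $fme:e\to f$ and $gnf:f\to g$ is $gnfme$), and identity of $e$ equal to $e$. Here $Me=\{me\mid m\in M\}$ is a left $M$-set under left multiplication; an element $a\in eMf$ corresponds to the $M$-map $Me\to Mf$, $me\mapsto ma$. *)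

theory Defs
  imports "HOL-Library.FuncSet"
begin

text \<open>The monoid M is the whole (finite) type 'a of class monoid_mult.
A left M-set is a carrier set A together with an action act.\<close>

definition left_mset :: "'b set \<Rightarrow> ('a::monoid_mult \<Rightarrow> 'b \<Rightarrow> 'b) \<Rightarrow> bool" where
  "left_mset A act \<longleftrightarrow>
     (\<forall>m a. a \<in> A \<longrightarrow> act m a \<in> A) \<and>
     (\<forall>a\<in>A. act 1 a = a) \<and>
     (\<forall>m n a. a \<in> A \<longrightarrow> act (m * n) a = act m (act n a))"

definition filtered :: "'b set \<Rightarrow> ('a::monoid_mult \<Rightarrow> 'b \<Rightarrow> 'b) \<Rightarrow> bool" where
  "filtered A act \<longleftrightarrow>
     A \<noteq> {} \<and>
     (\<forall>m1 m2 a. a \<in> A \<longrightarrow> act m1 a = act m2 a \<longrightarrow>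
        (\<exists>m a'. a' \<in> A \<and> act m a' = a \<and> m1 * m = m2 * m)) \<and>
     (\<forall>a1\<in>A. \<forall>a2\<in>A. \<exists>m1 m2 a. a \<in> A \<and> act m1 a = a1 \<and> act m2 a = a2)"

definition mset_hom :: "'b set \<Rightarrow> ('a::monoid_mult \<Rightarrow> 'b \<Rightarrow> 'b) \<Rightarrow> 'c set \<Rightarrow> ('a \<Rightarrow> 'c \<Rightarrow> 'c) \<Rightarrow> ('b \<Rightarrow> 'c) \<Rightarrow> bool" where
  "mset_hom A act B act' h \<longleftrightarrow>
     (\<forall>a\<in>A. h a \<in> B) \<and> (\<forall>m a. a \<in> A \<longrightarrow> h (act m a) = act' m (h a))"

definition mset_iso :: "'b set \<Rightarrow> ('a::monoid_mult \<Rightarrow> 'b \<Rightarrow> 'b) \<Rightarrow> 'c set \<Rightarrow> ('a \<Rightarrow> 'c \<Rightarrow> 'c) \<Rightarrow> bool" where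
  "mset_iso A act B act' \<longleftrightarrow> (\<exists>h. mset_hom A act B act' h \<and> bij_betw h A B)"

definition idempotent :: "'a::monoid_mult \<Rightarrow> bool" where
  "idempotent e \<longleftrightarrow> e * e = e"

text \<open>The left M-set Me (action: left multiplication).\<close>
definition principal :: "'a::monoid_mult \<Rightarrow> 'a set" where
  "principal e = {m * e | m. True}"

text \<open>Hom in the category I(M): Hom(e,f) = fMe.\<close>
definition homI :: "'a::monoid_mult \<Rightarrow> 'a \<Rightarrow> 'a set" where
  "homI e f = {f * m * e | m. True}"

text \<open>Action of the functor I(M)^op -> filtered M-sets on morphisms:
  a : e -> f in I(M) (a \<in> fMe) goes to the M-map Mf -> Me, x \<mapsto> x a.\<close>
definition Fmor :: "'a::monoid_mult \<Rightarrow> 'a \<Rightarrow> 'a \<Rightarrow> 'a" where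
  "Fmor f a = (\<lambda>x\<in>principal f. x * a)"

end

theory Submission
  imports Defs
begin

text \<open>
  A filtered left \<open>M\<close>-set \<open>A\<close> over a finite monoid is cyclic: an element \<open>a\<close> whose orbit \<open>Ma\<close>
  has maximal size generates \<open>A\<close>, since by (F3) every \<open>b\<close> lies together with \<open>a\<close> in an orbit
  \<open>Mc \<supseteq> Ma\<close>. Applying (F2) to the finitely many pairs \<open>(p, q)\<close> with \<open>pa = qa\<close> and using
  cyclicity gives \<open>y\<close> with \<open>ya = a\<close> and \<open>py = qy\<close> for all these pairs, so that \<open>pa = qa\<close> iff
  \<open>py = qy\<close>. The same holds for the idempotent power \<open>e\<close> of \<open>y\<close>, and \<open>ma \<mapsto> me\<close> is an
  isomorphism \<open>A \<cong> Me\<close>. For the equivalence, an \<open>M\<close>-map \<open>h : Mf \<rightarrow> Me\<close> is determined by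
  \<open>h f \<in> fMe\<close>, acting as \<open>x \<mapsto> x (h f)\<close>.
\<close>

lemma left_mset_closed: "left_mset A act \<Longrightarrow> a \<in> A \<Longrightarrow> act m a \<in> A"
  by (simp add: left_mset_def)

lemma left_mset_act_one: "left_mset A act \<Longrightarrow> a \<in> A \<Longrightarrow> act 1 a = a"
  by (simp add: left_mset_def)

lemma left_mset_act_mult: "left_mset A act \<Longrightarrow> a \<in> A \<Longrightarrow> act (m * n) a = act m (act n a)"
  by (simp add: left_mset_def)

lemma mset_iso_if_bij_hom:
  assumes B: "left_mset B act'" and h: "mset_hom B act' A act h" and bij: "bij_betw h B A"
  shows "mset_iso A act B act'"
proof -
  let ?g = "inv_into B h"
  have g_bij: "bij_betw ?g A B"
    by (rule bij_betw_inv_into[OF bij])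
  have "?g (act m a) = act' m (?g a)" if "a \<in> A" for m a
  proof -
    have b: "?g a \<in> B" and a: "a = h (?g a)"
      using g_bij bij that by (auto simp: bij_betw_def f_inv_into_f)
    have "act m a = h (act' m (?g a))"
      using h b by (subst a) (simp add: mset_hom_def)
    then show ?thesis
      using bij left_mset_closed[OF B b] by (simp add: bij_betw_def)
  qed
  then have "mset_hom A act B act' ?g"
    using g_bij by (auto simp: mset_hom_def bij_betw_def)
  then show ?thesis
    using g_bij by (auto simp: mset_iso_def)
qed

definition orbit :: "('a \<Rightarrow> 'b \<Rightarrow> 'b) \<Rightarrow> 'b \<Rightarrow> 'b set" where
  "orbit act a = range (\<lambda>m. act m a)"

lemma orbit_act_subset:
  "left_mset A act \<Longrightarrow> c \<in> A \<Longrightarrow> orbit act (act m c) \<subseteq> orbit act c"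
  by (auto simp: orbit_def simp flip: left_mset_act_mult)

lemma filtered_cyclic:
  fixes act :: "'a::{monoid_mult, finite} \<Rightarrow> 'b \<Rightarrow> 'b"
  assumes L: "left_mset A act" and F: "filtered A act"
  shows "\<exists>a\<in>A. A = orbit act a"
proof -
  let ?sizes = "(\<lambda>a. card (orbit act a)) ` A"
  have "finite ?sizes"
    by (rule finite_subset[of _ "{..card (UNIV :: 'a set)}"]) (auto simp: orbit_def card_image_le)
  moreover have "?sizes \<noteq> {}"
    using F by (simp add: filtered_def)
  ultimately have "Max ?sizes \<in> ?sizes"
    by (rule Max_in)
  then obtain a where a: "a \<in> A" "card (orbit act a) = Max ?sizes"
    by auto
  have "A \<subseteq> orbit act a"
  proof
    fix b assume "b \<in> A"
    with F a(1) obtain m1 m2 c where c: "c \<in> A" "act m1 c = a" "act m2 c = b"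
      unfolding filtered_def by meson
    have sub: "orbit act a \<subseteq> orbit act c"
      using orbit_act_subset[OF L c(1)] c(2) by blast
    have "card (orbit act c) \<le> card (orbit act a)"
      using a \<open>finite ?sizes\<close> c(1) by simp
    moreover have "finite (orbit act c)"
      by (simp add: orbit_def)
    ultimately have "orbit act a = orbit act c"
      using sub card_mono[of "orbit act c"] card_subset_eq[of "orbit act c"] by (simp add: le_antisym)
    then show "b \<in> orbit act a"
      using c(3) by (auto simp: orbit_def)
  qed
  moreover have "orbit act a \<subseteq> A"
    using L a(1) by (auto simp: orbit_def left_mset_closed)
  ultimately show ?thesis
    using a(1) by blast
qed

lemma filtered_equalizer_finite:
  assumes L: "left_mset A act" and F: "filtered A act" and a: "a \<in> A"
    and "finite T" and "T \<subseteq> {(p, q). act p a = act q a}"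
  shows "\<exists>x b. b \<in> A \<and> act x b = a \<and> (\<forall>(p, q)\<in>T. p * x = q * x)"
  using assms(4,5)
proof (induction T rule: finite_induct)
  case empty
  show ?case
    using a L by (intro exI[of _ 1] exI[of _ a]) (simp add: left_mset_act_one)
next
  case (insert pq T)
  then obtain x b where xb: "b \<in> A" "act x b = a" "\<forall>(p, q)\<in>T. p * x = q * x"
    by auto
  obtain p q where pq: "pq = (p, q)" and "act p a = act q a"
    using insert.prems by auto
  then have "act (p * x) b = act (q * x) b"
    using L xb by (simp add: left_mset_act_mult)
  then obtain m b' where m: "b' \<in> A" "act m b' = b" "p * x * m = q * x * m"
    using F xb(1) unfolding filtered_def by meson
  have "act (x * m) b' = a"
    using L m xb by (simp add: left_mset_act_mult)
  moreover have "\<forall>(p', q')\<in>insert pq T. p' * (x * m) = q' * (x * m)"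
    using xb(3) m(3) pq by (auto simp flip: mult.assoc)
  ultimately show ?case
    using m(1) by blast
qed

lemma filtered_cyclic_kernel_equalizer:
  fixes act :: "'a::{monoid_mult, finite} \<Rightarrow> 'b \<Rightarrow> 'b"
  assumes L: "left_mset A act" and F: "filtered A act"
    and a: "a \<in> A" and gen: "A = orbit act a"
  shows "\<exists>y. act y a = a \<and> (\<forall>p q. act p a = act q a \<longrightarrow> p * y = q * y)"
proof -
  obtain x b where xb: "b \<in> A" "act x b = a"
    and eq: "\<forall>(p, q)\<in>{(p, q). act p a = act q a}. p * x = q * x"
    using filtered_equalizer_finite[OF L F a finite subset_refl] by blast
  obtain n where b: "b = act n a"
    using xb(1) gen by (auto simp: orbit_def)
  have "act (x * n) a = act x b"
    using left_mset_act_mult[OF L a] b by simp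
  also have "\<dots> = a"
    by (fact xb(2))
  finally have "act (x * n) a = a" .
  moreover have "p * (x * n) = q * (x * n)" if "act p a = act q a" for p q
  proof -
    have "p * x = q * x"
      using eq that by blast
    then show ?thesis
      by (simp flip: mult.assoc)
  qed
  ultimately show ?thesis
    by blast
qed

lemma kernel_eq_mult_right:
  assumes L: "left_mset A act" and a: "a \<in> A" and fix_y: "act y a = a"
    and eq_y: "\<forall>p q. act p a = act q a \<longrightarrow> p * y = q * y"
  shows "act p a = act q a \<longleftrightarrow> p * y = q * y"
proof
  assume "p * y = q * y"
  then have "act (p * y) a = act (q * y) a"
    by simp
  then show "act p a = act q a"
    using L a fix_y by (simp add: left_mset_act_mult)
qed (use eq_y in blast)

lemma power_eventually_periodic:
  fixes x :: "'a::monoid_mult"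
  assumes "x ^ i = x ^ (i + d)" and "i \<le> n"
  shows "x ^ (n + t * d) = x ^ n"
proof (induction t)
  case (Suc t)
  obtain m where n: "n = m + i"
    using assms(2) by (metis le_add_diff_inverse2)
  have "x ^ (n + Suc t * d) = x ^ (m + t * d) * x ^ (i + d)"
    by (simp add: n algebra_simps flip: power_add)
  also have "\<dots> = x ^ (m + t * d) * x ^ i"
    by (simp only: assms(1))
  also have "\<dots> = x ^ (n + t * d)"
    by (simp add: n algebra_simps flip: power_add)
  finally show ?case
    using Suc by simp
qed simp

lemma finite_monoid_idempotent_power:
  fixes x :: "'a::{monoid_mult, finite}"
  shows "\<exists>k\<ge>1. idempotent (x ^ k)"
proof -
  have "\<not> inj (\<lambda>i::nat. x ^ i)"
    using finite_imageD[of "\<lambda>i::nat. x ^ i" UNIV] by auto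
  then obtain i j :: nat where "i < j" "x ^ i = x ^ j"
    unfolding inj_def by (metis linorder_neqE_nat)
  then obtain d where d: "d > 0" "x ^ i = x ^ (i + d)"
    using less_imp_add_positive by blast
  define k where "k = (i + 1) * d"
  have k: "1 \<le> k" "i \<le> k"
    using d(1) by (cases d; simp add: k_def)+
  have "x ^ k * x ^ k = x ^ (k + (i + 1) * d)"
    by (simp add: power_add k_def)
  also have "\<dots> = x ^ k"
    by (rule power_eventually_periodic[OF d(2) k(2)])
  finally show ?thesis
    using k(1) by (auto simp: idempotent_def)
qed

lemma mult_power_eq_right:
  fixes x :: "'a::monoid_mult"
  assumes "p * x = q * x" and "k \<ge> 1"
  shows "p * x ^ k = q * x ^ k"
proof -
  have "x ^ k = x * x ^ (k - 1)"
    using assms(2) by (simp add: power_eq_if)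
  then show ?thesis
    by (metis assms(1) mult.assoc)
qed

lemma act_power_fixed:
  assumes "left_mset A act" and "a \<in> A" and "act x a = a"
  shows "act (x ^ k) a = a"
  by (induction k) (use assms in \<open>simp_all add: left_mset_act_one left_mset_act_mult power_Suc2\<close>)

lemma mult_in_principal: "x * e \<in> principal e"
  by (auto simp: principal_def)

lemma in_principal_self: "e \<in> principal e"
  using mult_in_principal[of 1 e] by simp

lemma principal_idempotent_iff:
  assumes "idempotent e"
  shows "x \<in> principal e \<longleftrightarrow> x * e = x"
proof
  assume "x \<in> principal e"
  then obtain m where "x = m * e"
    by (auto simp: principal_def)
  then show "x * e = x"
    using assms by (simp add: idempotent_def mult.assoc)
qed (metis mult_in_principal)

lemma left_mset_principal: "left_mset (principal e) (*)"
  by (auto simp: left_mset_def principal_def simp flip: mult.assoc)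

lemma filtered_principal:
  assumes "idempotent e"
  shows "filtered (principal e) (*)"
  unfolding filtered_def
proof (intro conjI allI impI ballI)
  show "principal e \<noteq> {}"
    using in_principal_self by blast
next
  fix m1 m2 a assume "a \<in> principal e" and "m1 * a = m2 * a"
  then show "\<exists>m a'. a' \<in> principal e \<and> m * a' = a \<and> m1 * m = m2 * m"
    using in_principal_self assms by (metis principal_idempotent_iff)
next
  fix a1 a2 assume "a1 \<in> principal e" "a2 \<in> principal e"
  then show "\<exists>m1 m2 a. a \<in> principal e \<and> m1 * a = a1 \<and> m2 * a = a2"
    using in_principal_self assms by (metis principal_idempotent_iff)
qed

lemma cyclic_iso_principal:
  assumes L: "left_mset A act" and a: "a \<in> A" and gen: "A = orbit act a"
    and e: "idempotent e" and kernel: "\<And>p q. act p a = act q a \<longleftrightarrow> p * e = q * e"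
  shows "mset_iso A act (principal e) (*)"
proof (rule mset_iso_if_bij_hom[OF left_mset_principal])
  let ?h = "\<lambda>z. act z a"
  have act_e: "act (m * e) a = act m a" for m
    using kernel e by (simp add: idempotent_def mult.assoc)
  show "mset_hom (principal e) (*) A act ?h"
    using L a by (auto simp: mset_hom_def left_mset_closed left_mset_act_mult)
  have "inj_on ?h (principal e)"
    using e kernel by (auto intro: inj_onI simp: principal_idempotent_iff)
  moreover have "?h ` principal e = A"
  proof
    show "A \<subseteq> ?h ` principal e"
    proof
      fix b assume "b \<in> A"
      then obtain m where "b = act m a"
        using gen by (auto simp: orbit_def)
      then have "b = ?h (m * e)"
        by (simp add: act_e)
      then show "b \<in> ?h ` principal e"
        using mult_in_principal by blast
    qed
  qed (use gen in \<open>auto simp: orbit_def\<close>)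
  ultimately show "bij_betw ?h (principal e) A"
    by (simp add: bij_betw_def)
qed

lemma filtered_iso_principal:
  fixes act :: "'a::{monoid_mult, finite} \<Rightarrow> 'b \<Rightarrow> 'b"
  assumes L: "left_mset A act" and F: "filtered A act"
  shows "\<exists>e. idempotent e \<and> mset_iso A act (principal e) (*)"
proof -
  obtain a where a: "a \<in> A" and gen: "A = orbit act a"
    using filtered_cyclic[OF L F] by blast
  obtain y where fix_y: "act y a = a" and eq_y: "\<forall>p q. act p a = act q a \<longrightarrow> p * y = q * y"
    using filtered_cyclic_kernel_equalizer[OF L F a gen] by blast
  obtain k where k: "k \<ge> 1" "idempotent (y ^ k)"
    using finite_monoid_idempotent_power by blast
  have "act (y ^ k) a = a"
    using act_power_fixed[OF L a fix_y] .
  moreover have "\<forall>p q. act p a = act q a \<longrightarrow> p * y ^ k = q * y ^ k"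
    using eq_y k(1) mult_power_eq_right by blast
  ultimately have "act p a = act q a \<longleftrightarrow> p * y ^ k = q * y ^ k" for p q
    using kernel_eq_mult_right[OF L a] by blast
  then show ?thesis
    using cyclic_iso_principal[OF L a gen k(2)] k(2) by blast
qed

lemma homI_idempotent_iff:
  assumes e: "idempotent e" and f: "idempotent f"
  shows "a \<in> homI e f \<longleftrightarrow> f * a = a \<and> a * e = a"
proof
  assume "a \<in> homI e f"
  then obtain m where "a = f * m * e"
    by (auto simp: homI_def)
  then show "f * a = a \<and> a * e = a"
    using e f by (simp add: idempotent_def mult.assoc flip: mult.assoc[of f f])
next
  assume "f * a = a \<and> a * e = a"
  then have "a = f * a * e"
    by simp
  then show "a \<in> homI e f"
    unfolding homI_def by blast
qed

lemma Fmor_id: "idempotent e \<Longrightarrow> Fmor e e = (\<lambda>x\<in>principal e. x)"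
  by (auto simp: Fmor_def principal_idempotent_iff intro: restrict_ext)

lemma Fmor_comp:
  assumes "b \<in> homI f g"
  shows "Fmor g (b * a) = compose (principal g) (Fmor f a) (Fmor g b)"
proof -
  obtain n where "b = g * n * f"
    using assms by (auto simp: homI_def)
  then have "x * b \<in> principal f" for x
    using mult_in_principal[of "x * g * n" f] by (simp add: mult.assoc)
  then show ?thesis
    by (auto simp: Fmor_def compose_def mult.assoc)
qed

lemma Fmor_mset_hom:
  assumes "a \<in> homI e f"
  shows "mset_hom (principal f) (*) (principal e) (*) (Fmor f a)"
proof -
  obtain n where "a = f * n * e"
    using assms by (auto simp: homI_def)
  then have "x * a \<in> principal e" for x
    using mult_in_principal[of "x * f * n" e] by (simp add: mult.assoc)
  moreover have "m * x \<in> principal f" if "x \<in> principal f" for m x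
    using left_mset_closed[OF left_mset_principal that] .
  ultimately show ?thesis
    by (auto simp: mset_hom_def Fmor_def mult.assoc)
qed

lemma mset_hom_principal_eq_Fmor:
  assumes e: "idempotent e" and f: "idempotent f"
    and h: "h \<in> extensional (principal f)" "mset_hom (principal f) (*) (principal e) (*) h"
  shows "h f \<in> homI e f" and "h = Fmor f (h f)"
proof -
  have h_mult: "h (m * x) = m * h x" if "x \<in> principal f" for m x
    using h(2) that by (simp add: mset_hom_def)
  have "f * h f = h f"
    using h_mult[OF in_principal_self, of f] f by (simp add: idempotent_def)
  moreover have "h f * e = h f"
    using h(2) in_principal_self[of f] e by (simp add: mset_hom_def principal_idempotent_iff)
  ultimately show "h f \<in> homI e f"
    using e f by (simp add: homI_idempotent_iff)
  have "h x = x * h f" if "x \<in> principal f" for x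
    using h_mult[OF in_principal_self, of x] that f by (simp add: principal_idempotent_iff)
  then show "h = Fmor f (h f)"
    using h(1) by (auto simp: Fmor_def extensional_def)
qed

lemma Fmor_bij:
  assumes e: "idempotent e" and f: "idempotent f"
  shows "bij_betw (Fmor f) (homI e f)
           {h \<in> extensional (principal f). mset_hom (principal f) (*) (principal e) (*) h}"
proof (rule bij_betw_byWitness[where f' = "\<lambda>h. h f"])
  show "\<forall>a\<in>homI e f. Fmor f a f = a"
    using in_principal_self[of f] e f by (simp add: Fmor_def homI_idempotent_iff)
  show "Fmor f ` homI e f
          \<subseteq> {h \<in> extensional (principal f). mset_hom (principal f) (*) (principal e) (*) h}"
    using Fmor_mset_hom by (auto simp: Fmor_def)
qed (use mset_hom_principal_eq_Fmor[OF e f] in auto)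

theorem theorem3p14:
  fixes dummy :: "'a::{monoid_mult, finite}"
  shows
    \<comment> \<open>every filtered left M-set is isomorphic to Me for some idempotent e\<close>
    "(\<forall>(A::'b set) (act::'a \<Rightarrow> 'b \<Rightarrow> 'b). left_mset A act \<and> filtered A act \<longrightarrow>
        (\<exists>e::'a. idempotent e \<and> mset_iso A act (principal e) (*)))
   \<and> \<comment> \<open>the functor e \<mapsto> Me lands in filtered left M-sets\<close>
    (\<forall>e::'a. idempotent e \<longrightarrow> left_mset (principal e) (*) \<and> filtered (principal e) (*))
   \<and> \<comment> \<open>functoriality: identities and composition\<close>
    (\<forall>e::'a. idempotent e \<longrightarrow> Fmor e e = (\<lambda>x\<in>principal e. x))
   \<and> (\<forall>e f g a b::'a. idempotent e \<and> idempotent f \<and> idempotent g \<and>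
        a \<in> homI e f \<and> b \<in> homI f g \<longrightarrow>
        Fmor g (b * a) = compose (principal g) (Fmor f a) (Fmor g b))
   \<and> \<comment> \<open>full faithfulness: a \<mapsto> Fmor f a is a bijection fMe \<cong> Hom_M(Mf, Me)\<close>
    (\<forall>e f::'a. idempotent e \<and> idempotent f \<longrightarrow>
        bij_betw (Fmor f) (homI e f)
          {h \<in> extensional (principal f). mset_hom (principal f) (*) (principal e) (*) h})"
  using filtered_iso_principal left_mset_principal filtered_principal Fmor_id Fmor_comp Fmor_bij
  by blast

end
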